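(* Let $\tilde{\Phi}:\mathbb{R}_{++}^{n\times m}\to\mathbb{R}$ be smooth and strictly convex, and suppose its gradient map $S:\mathbb{R}_{++}^{n\times m}\to\mathbb{R}^{n\times m}$, $S^{ij}(A)=\partial\tilde{\Phi}/\partial A_{ij}(A)$, is surjective. Let $\Phi$ be the restriction of $\tilde{\Phi}$ to $\mathcal{P}_{nm-1}$. Then for each $p\in\mathcal{P}_{n-1}$, $q\in\mathcal{P}_{m-1}$, the problem of minimizing $\Phi(P)$ over $P\in\Pi(p,q)$ has a unique solution $P^*(p,q)\in\Pi(p,q)$ (in particular the infimum of $\Phi$ over $\Pi(p,q)$ is attained at a matrix with strictly positive entries, and $P^*(p,q)$ is also the unique minimizer over the closure $\overline{\Pi(p,q)}$ of the continuous extension of $\Phi$). Moreover, a maximizer $(\alpha^*,\beta^* )\in\mathbb{R}^n\times\mathbb{R}^m$ of the dual problem $\sup_{\alpha,\beta}\{\langle p,\alpha\rangle+\langle q,\beta\rangle-\tilde{\Phi}^*(\alpha\oplus\beta)\}$ exists, and any such maximizer satisfies \[ S^{ij}(P^*(p,q))=(\alpha^* )^i+(\beta^* )^j,\qquad 1\le i\le n,\ 1\le j\le m. \]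
   Context: $\mathbb{R}_{++}^{n\times m}$ denotes the set of real $n\times m$ matrices with all entries strictly positive. $\mathcal{P}_{n-1}=\{p\in\mathbb{R}^n:\sum_i p_i=1,\ p_i>0\}$, similarly $\mathcal{P}_{m-1}$, and $\mathcal{P}_{nm-1}=\{P\in\mathbb{R}_{++}^{n\times m}:\sum_{i,j}P_{ij}=1\}$. $\Pi(p,q)=\{P\in\mathcal{P}_{nm-1}:\sum_j P_{ij}=p_i\ \forall i,\ \sum_i P_{ij}=q_j\ \forall j\}$, and $\overline{\Pi(p,q)}$ is its closure in $\mathbb{R}^{n\times m}$. The Legendre transform is $\tilde{\Phi}^*(u)=\sup_{A\in\mathbb{R}_{++}^{n\times m}}\{\langle A,u\rangle-\tilde{\Phi}(A)\}$ with $\langle A,u\rangle=\sum_{i,j}A_{ij}u^{ij}$, and $(\alpha\oplus\beta)^{ij}=\alpha^i+\beta^j$. *)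

theory Defs
  imports "HOL-Analysis.Analysis"
begin

text \<open>Matrices in R^{n x m} are represented as real^'m^'n (row index of type 'n,
column index of type 'm). The inner product on this type is the Frobenius
product sum_ij A_ij u_ij.\<close>

primrec Ck_on :: "nat \<Rightarrow> 'a::euclidean_space set \<Rightarrow> ('a \<Rightarrow> real) \<Rightarrow> bool" where
  "Ck_on 0 U f = continuous_on U f"
| "Ck_on (Suc k) U f =
     (\<exists>D :: 'a \<Rightarrow> 'a \<Rightarrow> real.
        (\<forall>x\<in>U. (f has_derivative (\<lambda>h. \<Sum>b\<in>Basis. (h \<bullet> b) * D b x)) (at x)) \<and>
        (\<forall>b\<in>Basis. Ck_on k U (D b)))"

definition smooth_on :: "'a::euclidean_space set \<Rightarrow> ('a \<Rightarrow> real) \<Rightarrow> bool" where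
  "smooth_on U f \<longleftrightarrow> (\<forall>k. Ck_on k U f)"

definition strict_convex_on :: "'a::real_vector set \<Rightarrow> ('a \<Rightarrow> real) \<Rightarrow> bool" where
  "strict_convex_on S f \<longleftrightarrow> convex S \<and>
    (\<forall>x\<in>S. \<forall>y\<in>S. \<forall>t. x \<noteq> y \<and> 0 < t \<and> t < 1 \<longrightarrow>
       f ((1 - t) *\<^sub>R x + t *\<^sub>R y) < (1 - t) * f x + t * f y)"

definition pos_mats :: "(real^'m^'n) set" where
  "pos_mats = {A. \<forall>i j. A $ i $ j > 0}"

definition prob_simplex :: "(real^'n) set" where
  "prob_simplex = {p. (\<Sum>i\<in>UNIV. p $ i) = 1 \<and> (\<forall>i. p $ i > 0)}"

definition prob_mats :: "(real^'m^'n) set" where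
  "prob_mats = {P \<in> pos_mats. (\<Sum>i\<in>UNIV. \<Sum>j\<in>UNIV. P $ i $ j) = 1}"

definition couplings :: "real^'n \<Rightarrow> real^'m \<Rightarrow> (real^'m^'n) set" where
  "couplings p q = {P \<in> prob_mats.
      (\<forall>i. (\<Sum>j\<in>UNIV. P $ i $ j) = p $ i) \<and> (\<forall>j. (\<Sum>i\<in>UNIV. P $ i $ j) = q $ j)}"

definition legendre :: "(real^'m^'n \<Rightarrow> real) \<Rightarrow> real^'m^'n \<Rightarrow> real" where
  "legendre \<Phi> u = (SUP A\<in>pos_mats. A \<bullet> u - \<Phi> A)"

definition oplus :: "real^'n \<Rightarrow> real^'m \<Rightarrow> real^'m^'n" where
  "oplus \<alpha> \<beta> = (\<chi> i j. \<alpha> $ i + \<beta> $ j)"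

definition dual_obj :: "(real^'m^'n \<Rightarrow> real) \<Rightarrow> real^'n \<Rightarrow> real^'m \<Rightarrow> real^'n \<Rightarrow> real^'m \<Rightarrow> real" where
  "dual_obj \<Phi> p q \<alpha> \<beta> = p \<bullet> \<alpha> + q \<bullet> \<beta> - legendre \<Phi> (oplus \<alpha> \<beta>)"

end

theory Submission
  imports Defs
begin

text \<open>
  Since the gradient \<open>S\<close> is a bijection of the positive matrices onto all matrices, the
  supremum defining the Legendre transform at \<open>u\<close> is attained exactly at \<open>S\<^sup>-\<^sup>1 u\<close>, and
  \<open>S\<^sup>-\<^sup>1\<close> is continuous: a strict gap of the tilted potential on a small sphere survives small
  changes of \<open>u\<close>, and convexity keeps the minimiser inside that sphere.
  The dual objective is invariant under \<open>(\<alpha> + c, \<beta> - c)\<close>, and Fenchel-Young applied to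
  small perturbations of the product coupling bounds every \<open>\<alpha>\<^sub>i + \<beta>\<^sub>j\<close> on its superlevel
  sets, so a dual maximiser exists by compactness. Differentiating the dual objective at a
  maximiser shows that \<open>P = S\<^sup>-\<^sup>1 (\<alpha> \<oplus> \<beta>)\<close> has marginals \<open>p, q\<close>; the gradient inequality
  makes it a minimiser on the couplings, strict convexity makes it the only one, and midpoints
  of \<open>P\<close> with boundary points are again strictly positive couplings, which carries uniqueness
  over to the closure.
\<close>

section \<open>Convex functions\<close>

lemma strict_convex_on_imp_convex_on:
  assumes "strict_convex_on C f"
  shows "convex_on C f"
proof (rule convex_onI)
  show "convex C" using assms unfolding strict_convex_on_def by blast
  fix t :: real and x y assume "0 < t" "t < 1" "x \<in> C" "y \<in> C"
  then show "f ((1 - t) *\<^sub>R x + t *\<^sub>R y) \<le> (1 - t) * f x + t * f y"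
    using assms unfolding strict_convex_on_def
    by (cases "x = y") (auto simp: algebra_simps simp flip: scaleR_add_left intro: less_imp_le)
qed

lemma convex_on_cong_on:
  assumes "convex_on C f" "\<And>x. x \<in> C \<Longrightarrow> g x = f x"
  shows "convex_on C g"
  using assms unfolding convex_on_def convex_def by auto

lemma concave_on_inner_left: "convex C \<Longrightarrow> concave_on C (\<lambda>x. x \<bullet> w)"
  unfolding concave_on_iff by (simp add: inner_add_left)

lemma convex_midpoint_mem:
  assumes "convex D" "x \<in> D" "y \<in> D"
  shows "midpoint x y \<in> D"
  using assms midpoint_in_closed_segment[of x y] unfolding convex_contains_segment by blast

lemma midpoint_eq_convex_combination: "midpoint x y = (1 - 1/2) *\<^sub>R x + (1/2 :: real) *\<^sub>R y"
  by (simp add: midpoint_def scaleR_add_right)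

lemma strict_convex_on_midpoint_less:
  assumes "strict_convex_on C f" "x \<in> C" "y \<in> C" "x \<noteq> y"
  shows "f (midpoint x y) < (f x + f y) / 2"
proof -
  have "\<forall>t. 0 < t \<and> t < 1 \<longrightarrow> f ((1 - t) *\<^sub>R x + t *\<^sub>R y) < (1 - t) * f x + t * f y"
    using assms unfolding strict_convex_on_def by blast
  from this[rule_format, of "1/2"]
  have "f ((1 - 1/2) *\<^sub>R x + (1/2 :: real) *\<^sub>R y) < (1 - 1/2) * f x + (1/2) * f y"
    by simp
  then show ?thesis
    by (simp add: midpoint_eq_convex_combination)
qed

lemma strict_convex_on_minimizer_unique:
  assumes f: "strict_convex_on C f" and "D \<subseteq> C" "convex D" "x \<in> D" "y \<in> D"
    and "\<forall>z\<in>D. f x \<le> f z" "\<forall>z\<in>D. f y \<le> f z"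
  shows "x = y"
proof (rule ccontr)
  assume "x \<noteq> y"
  moreover have "x \<in> C" "y \<in> C"
    using assms by auto
  ultimately have "f (midpoint x y) < (f x + f y) / 2"
    by (intro strict_convex_on_midpoint_less[OF f])
  moreover have "midpoint x y \<in> D"
    using assms by (simp add: convex_midpoint_mem)
  then have "f x \<le> f (midpoint x y)" "f y \<le> f (midpoint x y)"
    using assms by blast+
  ultimately show False
    by (simp add: field_simps)
qed

lemma convex_on_midpoint_le:
  assumes "convex_on C f" "x \<in> C" "y \<in> C"
  shows "f (midpoint x y) \<le> (f x + f y) / 2"
  using convex_onD[OF assms(1), of "1/2" x y] assms by (simp add: midpoint_eq_convex_combination)

lemma convex_on_gradient_inequality:
  fixes f :: "'a::real_normed_vector \<Rightarrow> real"
  assumes f: "convex_on C f" and f': "(f has_derivative f') (at x)" and "x \<in> C" "y \<in> C"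
  shows "f x + f' (y - x) \<le> f y"
proof -
  define g where "g t = f (x + t *\<^sub>R (y - x))" for t :: real
  have "((\<lambda>t::real. x + t *\<^sub>R (y - x)) has_derivative (\<lambda>t. t *\<^sub>R (y - x))) (at 0)"
    by (auto intro!: derivative_eq_intros)
  moreover have "(f has_derivative f') (at ((\<lambda>t::real. x + t *\<^sub>R (y - x)) 0))"
    using f' by simp
  ultimately have "(g has_derivative (\<lambda>t. f' (t *\<^sub>R (y - x)))) (at 0)"
    unfolding g_def by (rule diff_chain_at[unfolded o_def])
  moreover have "f' (t *\<^sub>R (y - x)) = f' (y - x) * t" for t
    using linear_cmul[OF has_derivative_linear[OF f']] by simp
  ultimately have "(g has_field_derivative f' (y - x)) (at 0)"
    by (simp add: has_field_derivative_def)
  then have "((\<lambda>t. (g t - g 0) / t) \<longlongrightarrow> f' (y - x)) (at_right 0)"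
    by (simp add: DERIV_def filterlim_at_split)
  moreover have "\<forall>\<^sub>F t in at_right 0. (g t - g 0) / t \<le> f y - f x"
    unfolding eventually_at_right_field
  proof (intro exI[of _ 1] conjI allI impI)
    fix t :: real assume "0 < t" "t < 1"
    then have t: "0 < t \<and> t < 1" by simp
    have "x + t *\<^sub>R (y - x) = (1 - t) *\<^sub>R x + t *\<^sub>R y"
      by (simp add: algebra_simps)
    then have "g t - g 0 \<le> t * (f y - f x)"
      using convex_onD[OF f, of t x y] t assms by (simp add: g_def algebra_simps)
    then show "(g t - g 0) / t \<le> f y - f x"
      using t by (simp add: divide_le_eq mult.commute)
  qed simp
  ultimately have "f' (y - x) \<le> f y - f x"
    by (rule tendsto_upperbound) simp
  then show ?thesis by simp
qed

lemma convex_on_closure: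
  fixes f :: "'a::real_normed_vector \<Rightarrow> real"
  assumes f: "convex_on C f" and cont: "continuous_on (closure C) f"
  shows "convex_on (closure C) f"
proof (rule convex_onI)
  have C: "convex C" using convex_on_imp_convex[OF f] .
  then show "convex (closure C)" by (rule convex_closure)
  fix t :: real and x y assume t: "0 < t" "t < 1" and xy: "x \<in> closure C" "y \<in> closure C"
  define h where "h z = f ((1 - t) *\<^sub>R fst z + t *\<^sub>R snd z) - (1 - t) * f (fst z) - t * f (snd z)"
    for z :: "'a \<times> 'a"
  have seg: "(1 - t) *\<^sub>R a + t *\<^sub>R b \<in> closure C" if "a \<in> closure C" "b \<in> closure C" for a b
    using that convex_closure[OF C] t unfolding convex_alt by simp
  have "continuous_on (closure (C \<times> C)) h"
    unfolding h_def
    by (intro continuous_intros continuous_on_compose2[OF cont]) (auto simp: closure_Times intro!: seg)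
  moreover have "(x, y) \<in> closure (C \<times> C)" using xy by (simp add: closure_Times)
  moreover have "h z \<le> 0" if "z \<in> C \<times> C" for z
    using convex_onD[OF f, of t "fst z" "snd z"] t that by (auto simp: h_def)
  ultimately have "h (x, y) \<le> 0" by (rule continuous_le_on_closure)
  then show "f ((1 - t) *\<^sub>R x + t *\<^sub>R y) \<le> (1 - t) * f x + t * f y"
    by (simp add: h_def)
qed

lemma convex_on_sublevel_subset_ball:
  fixes f :: "'a::real_normed_vector \<Rightarrow> real"
  assumes f: "convex_on C f" and "a \<in> C" "b \<in> C" "0 < r"
    and sphere: "\<And>x. x \<in> sphere a r \<Longrightarrow> f a < f x"
    and "f b \<le> f a"
  shows "dist b a < r"
proof (rule ccontr)
  assume "\<not> dist b a < r"
  then have far: "r \<le> dist b a" by simp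
  define s where "s = r / dist b a"
  have pos: "0 < dist b a" using far \<open>0 < r\<close> by linarith
  then have s: "0 < s" "s \<le> 1"
    using far \<open>0 < r\<close> by (simp_all add: s_def)
  define x where "x = (1 - s) *\<^sub>R a + s *\<^sub>R b"
  have "x - a = s *\<^sub>R (b - a)"
    by (simp add: x_def algebra_simps)
  then have "dist a x = norm (s *\<^sub>R (b - a))"
    by (metis dist_norm dist_commute)
  then have "dist a x = s * dist b a"
    using s by (simp add: dist_norm)
  then have "x \<in> sphere a r"
    using pos by (simp add: s_def)
  moreover have "f x \<le> (1 - s) * f a + s * f b"
    using convex_onD[OF f, of s a b] s assms by (simp add: x_def)
  moreover have "(1 - s) * f a + s * f b \<le> f a"
    using \<open>f b \<le> f a\<close> s by (simp add: algebra_simps)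
  ultimately show False
    using sphere by force
qed

lemma unique_minimizer_on_closure:
  fixes f :: "'a::real_normed_vector \<Rightarrow> real"
  assumes f: "convex_on C f" and cont: "continuous_on (closure C) f"
    and "P \<in> C" and min: "\<forall>Q\<in>C. f P \<le> f Q"
    and unique: "\<forall>P'\<in>C. (\<forall>Q\<in>C. f P' \<le> f Q) \<longrightarrow> P' = P"
    and mid: "\<And>P'. P' \<in> closure C \<Longrightarrow> midpoint P P' \<in> C"
  shows "(\<forall>Q\<in>closure C. f P \<le> f Q)
    \<and> (\<forall>P'\<in>closure C. (\<forall>Q\<in>closure C. f P' \<le> f Q) \<longrightarrow> P' = P)"
proof (intro conjI ballI impI)
  show "f P \<le> f Q" if "Q \<in> closure C" for Q
    using continuous_ge_on_closure[OF cont that] min by blast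
  fix P' assume P': "P' \<in> closure C" and min': "\<forall>Q\<in>closure C. f P' \<le> f Q"
  have P: "P \<in> closure C" using \<open>P \<in> C\<close> closure_subset by blast
  have "f (midpoint P P') \<le> (f P + f P') / 2"
    using convex_on_midpoint_le[OF convex_on_closure[OF f cont] P P'] .
  also have "\<dots> \<le> f P"
    using min' P by auto
  finally have "\<forall>Q\<in>C. f (midpoint P P') \<le> f Q"
    using min by force
  then have "midpoint P P' = P"
    using unique mid[OF P'] by blast
  then show "P' = P" by simp
qed

section \<open>Matrices, couplings and the dual objective\<close>

lemma convex_comb_pos:
  fixes x y u v :: real
  assumes "0 < x" "0 < y" "0 \<le> u" "0 \<le> v" "u + v = 1"
  shows "0 < u * x + v * y"
  using assms by (cases "u = 0") (auto intro: add_pos_nonneg)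

lemma open_pos_mats: "open (pos_mats :: (real^'m::finite^'n::finite) set)"
proof -
  have "open {A :: real^'m^'n. 0 < A $ i $ j}" for i j
    by (intro open_Collect_less continuous_intros)
  then have "open (\<Inter>i\<in>UNIV. \<Inter>j\<in>UNIV. {A :: real^'m^'n. 0 < A $ i $ j})"
    by (intro open_INT ballI) auto
  moreover have "pos_mats = (\<Inter>i\<in>UNIV. \<Inter>j\<in>UNIV. {A :: real^'m^'n. 0 < A $ i $ j})"
    unfolding pos_mats_def by auto
  ultimately show ?thesis by simp
qed

lemma convex_pos_mats: "convex (pos_mats :: (real^'m::finite^'n::finite) set)"
  unfolding pos_mats_def convex_def by (auto intro!: convex_comb_pos)

lemma norm_axis_axis_1: "norm (axis i (axis j (1::real))) = 1"
  by (simp add: norm_eq_sqrt_inner inner_axis_axis)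

lemma couplings_subset_pos_mats: "couplings p q \<subseteq> pos_mats"
  unfolding couplings_def prob_mats_def by blast

lemma couplings_total_mass:
  assumes "P \<in> couplings p q"
  shows "(\<Sum>i\<in>UNIV. p $ i) = 1"
  using assms unfolding couplings_def prob_mats_def by auto

lemma mem_couplingsI:
  assumes "\<forall>i j. 0 < P $ i $ j" "\<forall>i. (\<Sum>j\<in>UNIV. P $ i $ j) = p $ i"
    "\<forall>j. (\<Sum>i\<in>UNIV. P $ i $ j) = q $ j" "(\<Sum>i\<in>UNIV. p $ i) = 1"
  shows "P \<in> couplings p q"
  using assms unfolding couplings_def prob_mats_def pos_mats_def by simp

lemma convex_couplings: "convex (couplings (p :: real^'n::finite) (q :: real^'m::finite))"
proof (rule convexI)
  fix P Q :: "real^'m^'n" and u v :: real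
  assume P: "P \<in> couplings p q" and Q: "Q \<in> couplings p q" and uv: "0 \<le> u" "0 \<le> v" "u + v = 1"
  let ?R = "u *\<^sub>R P + v *\<^sub>R Q"
  have "\<forall>i j. 0 < ?R $ i $ j"
    using P Q uv unfolding couplings_def prob_mats_def pos_mats_def by (simp add: convex_comb_pos)
  moreover have "(\<Sum>j\<in>UNIV. ?R $ i $ j) = (u + v) * p $ i" for i
    using P Q unfolding couplings_def by (simp add: sum.distrib distrib_right flip: sum_distrib_left)
  moreover have "(\<Sum>i\<in>UNIV. ?R $ i $ j) = (u + v) * q $ j" for j
    using P Q unfolding couplings_def by (simp add: sum.distrib distrib_right flip: sum_distrib_left)
  ultimately show "?R \<in> couplings p q"
    using uv couplings_total_mass[OF P] by (simp add: mem_couplingsI)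
qed

lemma closure_couplings_subset:
  "closure (couplings p q) \<subseteq> {X :: real^'m::finite^'n::finite. (\<forall>i j. 0 \<le> X $ i $ j)
     \<and> (\<forall>i. (\<Sum>j\<in>UNIV. X $ i $ j) = p $ i) \<and> (\<forall>j. (\<Sum>i\<in>UNIV. X $ i $ j) = q $ j)}"
  (is "_ \<subseteq> ?K")
proof (rule closure_minimal)
  show "couplings p q \<subseteq> ?K"
    unfolding couplings_def prob_mats_def pos_mats_def by (auto simp: less_imp_le)
  show "closed ?K"
    unfolding Collect_conj_eq Collect_all_eq
    by (intro closed_Int closed_INT ballI closed_Collect_le closed_Collect_eq continuous_intros)
qed

lemma midpoint_in_couplings:
  assumes P: "P \<in> couplings p q" and X: "X \<in> closure (couplings p q)"
  shows "midpoint P X \<in> couplings p q"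
proof (rule mem_couplingsI)
  have X0: "\<forall>i j. 0 \<le> X $ i $ j" and Xr: "\<forall>i. (\<Sum>j\<in>UNIV. X $ i $ j) = p $ i"
    and Xc: "\<forall>j. (\<Sum>i\<in>UNIV. X $ i $ j) = q $ j"
    using X closure_couplings_subset by blast+
  have P0: "\<forall>i j. 0 < P $ i $ j" and Pr: "\<forall>i. (\<Sum>j\<in>UNIV. P $ i $ j) = p $ i"
    and Pc: "\<forall>j. (\<Sum>i\<in>UNIV. P $ i $ j) = q $ j"
    using P unfolding couplings_def prob_mats_def pos_mats_def by auto
  show "\<forall>i j. 0 < midpoint P X $ i $ j"
    using P0 X0 by (simp add: midpoint_def add_pos_nonneg)
  show "\<forall>i. (\<Sum>j\<in>UNIV. midpoint P X $ i $ j) = p $ i"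
    using Pr Xr by (simp add: midpoint_def sum.distrib flip: sum_divide_distrib)
  show "\<forall>j. (\<Sum>i\<in>UNIV. midpoint P X $ i $ j) = q $ j"
    using Pc Xc by (simp add: midpoint_def sum.distrib flip: sum_divide_distrib)
  show "(\<Sum>i\<in>UNIV. p $ i) = 1"
    using couplings_total_mass[OF P] .
qed

lemma product_coupling:
  assumes "p \<in> prob_simplex" "q \<in> prob_simplex"
  shows "(\<chi> i j. p $ i * q $ j) \<in> couplings p q"
  using assms unfolding prob_simplex_def
  by (intro mem_couplingsI) (simp_all flip: sum_distrib_left sum_distrib_right)

lemma sum_axis_mult: "(\<Sum>k\<in>UNIV. axis i (c :: real) $ k * f k) = c * f i"
proof -
  have "(\<Sum>k\<in>UNIV. axis i c $ k * f k) = (\<Sum>k\<in>UNIV. if i = k then c * f i else 0)"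
    by (rule sum.cong) (auto simp: axis_def)
  then show ?thesis by simp
qed

lemma oplus_nth [simp]: "oplus \<alpha> \<beta> $ i $ j = \<alpha> $ i + \<beta> $ j"
  by (simp add: oplus_def)

lemma inner_oplus:
  fixes P :: "real^'m::finite^'n::finite"
  shows "P \<bullet> oplus \<alpha> \<beta> = (\<Sum>i\<in>UNIV. \<alpha> $ i * (\<Sum>j\<in>UNIV. P $ i $ j)) + (\<Sum>j\<in>UNIV. \<beta> $ j * (\<Sum>i\<in>UNIV. P $ i $ j))"
proof -
  have "P \<bullet> oplus \<alpha> \<beta> = (\<Sum>i\<in>UNIV. \<Sum>j\<in>UNIV. \<alpha> $ i * P $ i $ j) + (\<Sum>i\<in>UNIV. \<Sum>j\<in>UNIV. \<beta> $ j * P $ i $ j)"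
    by (simp add: inner_vec_def oplus_def algebra_simps sum.distrib)
  then show ?thesis
    by (simp add: sum_distrib_left sum.swap[of _ "UNIV :: 'n set"])
qed

lemma couplings_inner_oplus:
  assumes "P \<in> couplings p q"
  shows "P \<bullet> oplus \<alpha> \<beta> = p \<bullet> \<alpha> + q \<bullet> \<beta>"
  using assms unfolding couplings_def inner_oplus by (simp add: inner_vec_def mult.commute)

lemma dual_obj_shift:
  assumes "(\<Sum>i\<in>UNIV. p $ i) = 1" "(\<Sum>j\<in>UNIV. q $ j) = 1"
  shows "dual_obj \<Phi> p q (\<chi> i. \<alpha> $ i + c) (\<chi> j. \<beta> $ j - c) = dual_obj \<Phi> p q \<alpha> \<beta>"
proof -
  have "oplus (\<chi> i. \<alpha> $ i + c) (\<chi> j. \<beta> $ j - c) = oplus \<alpha> \<beta>"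
    by (simp add: vec_eq_iff oplus_def)
  moreover have "p \<bullet> (\<chi> i. \<alpha> $ i + c) = p \<bullet> \<alpha> + (\<Sum>i\<in>UNIV. p $ i) * c"
    by (simp add: inner_vec_def distrib_left sum.distrib sum_distrib_right)
  moreover have "q \<bullet> (\<chi> j. \<beta> $ j - c) = q \<bullet> \<beta> - (\<Sum>j\<in>UNIV. q $ j) * c"
    by (simp add: inner_vec_def right_diff_distrib sum_subtractf sum_distrib_right)
  ultimately show ?thesis
    using assms by (simp add: dual_obj_def)
qed

lemma norm_le_if_oplus_bounded:
  fixes \<alpha> :: "real^'n::finite" and \<beta> :: "real^'m::finite"
  assumes bound: "\<forall>i j. \<bar>\<alpha> $ i + \<beta> $ j\<bar> \<le> R" and "\<beta> $ j0 = 0"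
  shows "norm (\<alpha>, \<beta>) \<le> real CARD('n) * R + real CARD('m) * (2 * R)"
proof -
  have \<alpha>: "\<bar>\<alpha> $ i\<bar> \<le> R" for i
    using bound[rule_format, of i j0] \<open>\<beta> $ j0 = 0\<close> by simp
  have \<beta>: "\<bar>\<beta> $ j\<bar> \<le> 2 * R" for j
    using bound[rule_format, of undefined j] \<alpha>[of undefined] by linarith
  have "norm \<alpha> \<le> real CARD('n) * R"
    using norm_le_l1_cart[of \<alpha>] sum_bounded_above[of UNIV "\<lambda>i. \<bar>\<alpha> $ i\<bar>" R] \<alpha> by simp
  moreover have "norm \<beta> \<le> real CARD('m) * (2 * R)"
    using norm_le_l1_cart[of \<beta>] sum_bounded_above[of UNIV "\<lambda>j. \<bar>\<beta> $ j\<bar>" "2 * R"] \<beta> by simp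
  ultimately show ?thesis
    using norm_Pair_le[of \<alpha> \<beta>] by linarith
qed

section \<open>Legendre transform of a strictly convex potential\<close>

locale strictly_convex_potential =
  fixes \<Phi> :: "real^'m::finite^'n::finite \<Rightarrow> real"
    and S :: "real^'m^'n \<Rightarrow> real^'m^'n"
  assumes strict: "strict_convex_on pos_mats \<Phi>"
    and grad: "\<forall>A\<in>pos_mats. (\<Phi> has_derivative (\<lambda>H. S A \<bullet> H)) (at A)"
    and surj: "S ` pos_mats = UNIV"
begin

lemma convex: "convex_on pos_mats \<Phi>"
  using strict by (rule strict_convex_on_imp_convex_on)

lemma continuous: "continuous_on pos_mats \<Phi>"
  using grad has_derivative_continuous continuous_at_imp_continuous_on by blast

lemma convex_tilted: "convex_on pos_mats (\<lambda>X. \<Phi> X - X \<bullet> u)"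
  by (intro convex_on_diff convex concave_on_inner_left convex_pos_mats)

lemma gradient_inequality:
  assumes "X \<in> pos_mats" "Y \<in> pos_mats"
  shows "\<Phi> X + S X \<bullet> (Y - X) \<le> \<Phi> Y"
  using convex_on_gradient_inequality[OF convex] grad assms by blast

lemma gradient_maximizes_tilted:
  assumes "X \<in> pos_mats" "A \<in> pos_mats"
  shows "X \<bullet> S A - \<Phi> X \<le> A \<bullet> S A - \<Phi> A"
  using gradient_inequality[OF assms(2,1)] by (simp add: inner_diff_right inner_commute)

lemma tilted_maximizer_unique:
  assumes "X \<in> pos_mats" "Y \<in> pos_mats"
    and "\<forall>Z\<in>pos_mats. Z \<bullet> u - \<Phi> Z \<le> X \<bullet> u - \<Phi> X"
    and "\<forall>Z\<in>pos_mats. Z \<bullet> u - \<Phi> Z \<le> Y \<bullet> u - \<Phi> Y"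
  shows "X = Y"
proof (rule ccontr)
  assume "X \<noteq> Y"
  then have "\<Phi> (midpoint X Y) < (\<Phi> X + \<Phi> Y) / 2"
    using assms by (intro strict_convex_on_midpoint_less[OF strict])
  moreover have "midpoint X Y \<bullet> u = (X \<bullet> u + Y \<bullet> u) / 2"
    by (simp add: midpoint_def inner_add_left)
  moreover have "midpoint X Y \<in> pos_mats"
    by (rule convex_midpoint_mem[OF convex_pos_mats assms(1,2)])
  then have "midpoint X Y \<bullet> u - \<Phi> (midpoint X Y) \<le> X \<bullet> u - \<Phi> X"
    "midpoint X Y \<bullet> u - \<Phi> (midpoint X Y) \<le> Y \<bullet> u - \<Phi> Y"
    using assms by blast+
  ultimately show False
    by (simp add: field_simps)
qed

definition S_inv :: "real^'m^'n \<Rightarrow> real^'m^'n" where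
  "S_inv = inv_into pos_mats S"

lemma S_inv_mem: "S_inv u \<in> pos_mats"
  unfolding S_inv_def using surj by (metis UNIV_I inv_into_into)

lemma S_S_inv [simp]: "S (S_inv u) = u"
  unfolding S_inv_def using surj by (metis UNIV_I f_inv_into_f)

lemma S_inv_maximizes_tilted: "X \<in> pos_mats \<Longrightarrow> X \<bullet> u - \<Phi> X \<le> S_inv u \<bullet> u - \<Phi> (S_inv u)"
  using gradient_maximizes_tilted[OF _ S_inv_mem, of X u] by simp

lemma tilted_maximizer_eq_S_inv:
  assumes "X \<in> pos_mats" "\<forall>Z\<in>pos_mats. Z \<bullet> u - \<Phi> Z \<le> X \<bullet> u - \<Phi> X"
  shows "X = S_inv u"
  using tilted_maximizer_unique[OF assms(1) S_inv_mem assms(2)] S_inv_maximizes_tilted by blast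

lemma legendre_eq: "legendre \<Phi> u = S_inv u \<bullet> u - \<Phi> (S_inv u)"
  unfolding legendre_def by (rule cSup_eq_maximum) (auto intro: S_inv_mem S_inv_maximizes_tilted)

lemma fenchel_young: "X \<in> pos_mats \<Longrightarrow> X \<bullet> u - \<Phi> X \<le> legendre \<Phi> u"
  using S_inv_maximizes_tilted legendre_eq by simp

lemma S_inv_gap_on_sphere:
  assumes "0 < r" "sphere (S_inv u) r \<subseteq> pos_mats"
  obtains m where "0 < m"
    "\<And>X. X \<in> sphere (S_inv u) r \<Longrightarrow> \<Phi> (S_inv u) - S_inv u \<bullet> u + m \<le> \<Phi> X - X \<bullet> u"
proof -
  define F where "F X = \<Phi> X - X \<bullet> u" for X
  have "continuous_on (sphere (S_inv u) r) F"
    unfolding F_def by (intro continuous_intros continuous_on_subset[OF continuous assms(2)])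
  moreover have "sphere (S_inv u) r \<noteq> {}"
    using \<open>0 < r\<close> by simp
  ultimately obtain X0 where X0: "X0 \<in> sphere (S_inv u) r"
    and X0_min: "\<And>X. X \<in> sphere (S_inv u) r \<Longrightarrow> F X0 \<le> F X"
    using continuous_attains_inf[OF compact_sphere] by blast
  have X0_pos: "X0 \<in> pos_mats"
    using X0 assms(2) by blast
  have "F (S_inv u) \<le> F X0"
    using S_inv_maximizes_tilted[OF X0_pos, of u] by (simp add: F_def)
  moreover have "F X0 \<noteq> F (S_inv u)"
  proof
    assume "F X0 = F (S_inv u)"
    then have eq: "\<Phi> X0 - X0 \<bullet> u = \<Phi> (S_inv u) - S_inv u \<bullet> u"
      by (simp add: F_def)
    have "\<forall>Z\<in>pos_mats. Z \<bullet> u - \<Phi> Z \<le> X0 \<bullet> u - \<Phi> X0"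
    proof
      fix Z :: "real^'m^'n" assume "Z \<in> pos_mats"
      from S_inv_maximizes_tilted[OF this, of u] eq
      show "Z \<bullet> u - \<Phi> Z \<le> X0 \<bullet> u - \<Phi> X0" by linarith
    qed
    then have "X0 = S_inv u"
      by (rule tilted_maximizer_eq_S_inv[OF X0_pos])
    then show False
      using X0 \<open>0 < r\<close> by simp
  qed
  ultimately have "0 < F X0 - F (S_inv u)"
    by simp
  then show ?thesis
    by (rule that) (use X0_min in \<open>simp add: F_def\<close>)
qed

lemma continuous_S_inv: "continuous_on UNIV S_inv"
  unfolding continuous_on_iff
proof (intro ballI allI impI)
  fix u :: "real^'m^'n" and e :: real assume "0 < e"
  define A where "A = S_inv u"
  obtain r0 where "0 < r0" "cball A r0 \<subseteq> pos_mats"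
    using open_pos_mats[unfolded open_contains_cball] S_inv_mem unfolding A_def by blast
  define r where "r = min (e / 2) r0"
  have r: "0 < r" "r < e" "sphere A r \<subseteq> pos_mats"
    using \<open>0 < e\<close> \<open>0 < r0\<close> \<open>cball A r0 \<subseteq> pos_mats\<close> by (auto simp: r_def)
  obtain m where m: "0 < m" "\<And>X. X \<in> sphere A r \<Longrightarrow> \<Phi> A - A \<bullet> u + m \<le> \<Phi> X - X \<bullet> u"
    using S_inv_gap_on_sphere r unfolding A_def by blast
  show "\<exists>d>0. \<forall>u'\<in>UNIV. dist u' u < d \<longrightarrow> dist (S_inv u') (S_inv u) < e"
  proof (intro exI[of _ "m / (2 * r)"] conjI ballI impI)
    show "0 < m / (2 * r)" using m r by simp
    fix u' :: "real^'m^'n" assume close: "dist u' u < m / (2 * r)"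
    have "\<Phi> A - A \<bullet> u' < \<Phi> X - X \<bullet> u'" if X: "X \<in> sphere A r" for X
    proof -
      have "\<bar>(X - A) \<bullet> (u' - u)\<bar> \<le> norm (X - A) * norm (u' - u)"
        by (rule Cauchy_Schwarz_ineq2)
      also have "\<dots> = r * dist u' u"
        using X by (simp add: dist_norm norm_minus_commute)
      also have "\<dots> < m"
        using close r m by (simp add: field_simps)
      finally show ?thesis
        using m(2)[OF X] by (simp add: inner_diff_left inner_diff_right abs_less_iff)
    qed
    moreover have "\<Phi> (S_inv u') - S_inv u' \<bullet> u' \<le> \<Phi> A - A \<bullet> u'"
      using S_inv_maximizes_tilted[of A u'] S_inv_mem unfolding A_def by simp
    ultimately have "dist (S_inv u') A < r"
      using convex_on_sublevel_subset_ball[OF convex_tilted, of A "S_inv u'" r]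
        S_inv_mem r(1) unfolding A_def by blast
    then show "dist (S_inv u') (S_inv u) < e"
      using r unfolding A_def by simp
  qed
qed

lemma continuous_legendre: "continuous_on UNIV (legendre \<Phi>)"
proof -
  have "continuous_on UNIV (\<lambda>u. \<Phi> (S_inv u))"
    using continuous_on_compose2[OF continuous continuous_S_inv] S_inv_mem by blast
  then show ?thesis
    unfolding legendre_eq[abs_def] by (intro continuous_intros continuous_S_inv)
qed

section \<open>The dual problem\<close>

lemma dual_obj_le_primal:
  assumes "A \<in> pos_mats"
  shows "dual_obj \<Phi> p q \<alpha> \<beta> \<le> \<Phi> A + (p \<bullet> \<alpha> + q \<bullet> \<beta> - A \<bullet> oplus \<alpha> \<beta>)"
  using fenchel_young[OF assms, of "oplus \<alpha> \<beta>"] by (simp add: dual_obj_def)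

lemma dual_superlevel_entry_bounded:
  assumes "p \<in> prob_simplex" "q \<in> prob_simplex"
  obtains R where "\<And>\<alpha> \<beta>. c \<le> dual_obj \<Phi> p q \<alpha> \<beta> \<Longrightarrow> \<bar>\<alpha> $ i + \<beta> $ j\<bar> \<le> R"
proof -
  define P0 :: "real^'m^'n" where "P0 = (\<chi> i j. p $ i * q $ j)"
  have P0: "P0 \<in> couplings p q"
    using product_coupling[OF assms] by (simp add: P0_def)
  then have "P0 \<in> pos_mats"
    unfolding couplings_def prob_mats_def by blast
  then obtain \<epsilon> where "0 < \<epsilon>" "ball P0 \<epsilon> \<subseteq> pos_mats"
    using open_pos_mats open_contains_ball by blast
  define \<delta> where "\<delta> = \<epsilon> / 2"
  define E :: "real^'m^'n" where "E = \<delta> *\<^sub>R axis i (axis j 1)"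
  have \<delta>: "0 < \<delta>" using \<open>0 < \<epsilon>\<close> by (simp add: \<delta>_def)
  have E_pos: "P0 + s *\<^sub>R E \<in> pos_mats" if "\<bar>s\<bar> \<le> 1" for s
  proof -
    have "norm (s *\<^sub>R E) = \<bar>s\<bar> * \<delta>"
      using \<delta> by (simp add: E_def norm_axis_axis_1 abs_mult)
    also have "\<dots> < \<epsilon>"
      using that \<delta> by (simp add: \<delta>_def mult_le_cancel_right1 order.strict_trans1)
    finally show ?thesis
      using \<open>ball P0 \<epsilon> \<subseteq> pos_mats\<close> by (auto simp: dist_norm)
  qed
  have E_inner: "(P0 + s *\<^sub>R E) \<bullet> oplus \<alpha> \<beta> = p \<bullet> \<alpha> + q \<bullet> \<beta> + s * \<delta> * (\<alpha> $ i + \<beta> $ j)"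
    for s \<alpha> \<beta>
    using couplings_inner_oplus[OF P0] by (simp add: inner_add_left E_def inner_axis')
  have bound: "dual_obj \<Phi> p q \<alpha> \<beta> + s * \<delta> * (\<alpha> $ i + \<beta> $ j) \<le> \<Phi> (P0 + s *\<^sub>R E)"
    if "\<bar>s\<bar> \<le> 1" for s \<alpha> \<beta>
    using dual_obj_le_primal[OF E_pos[OF that], of p q \<alpha> \<beta>] E_inner[of s \<alpha> \<beta>] by simp
  define M where "M = max (\<Phi> (P0 + 1 *\<^sub>R E) - c) (\<Phi> (P0 + (-1) *\<^sub>R E) - c)"
  show ?thesis
  proof (rule that)
    fix \<alpha> \<beta> assume c: "c \<le> dual_obj \<Phi> p q \<alpha> \<beta>"
    define x where "x = \<delta> * (\<alpha> $ i + \<beta> $ j)"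
    have "dual_obj \<Phi> p q \<alpha> \<beta> + x \<le> \<Phi> (P0 + 1 *\<^sub>R E)"
      "dual_obj \<Phi> p q \<alpha> \<beta> - x \<le> \<Phi> (P0 + (-1) *\<^sub>R E)"
      using bound[of 1 \<alpha> \<beta>] bound[of "-1" \<alpha> \<beta>] unfolding x_def by simp_all
    then have "x \<le> M" "- x \<le> M"
      using c unfolding M_def by linarith+
    then show "\<bar>\<alpha> $ i + \<beta> $ j\<bar> \<le> M / \<delta>"
      using \<delta> unfolding x_def abs_le_iff by (simp add: le_divide_eq algebra_simps)
  qed
qed

lemma dual_superlevel_bounded:
  assumes "p \<in> prob_simplex" "q \<in> prob_simplex"
  obtains R where "\<And>\<alpha> \<beta> i j. c \<le> dual_obj \<Phi> p q \<alpha> \<beta> \<Longrightarrow> \<bar>\<alpha> $ i + \<beta> $ j\<bar> \<le> R"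
proof -
  have "\<forall>ij :: 'n \<times> 'm. \<exists>R. \<forall>\<alpha> \<beta>. c \<le> dual_obj \<Phi> p q \<alpha> \<beta> \<longrightarrow> \<bar>\<alpha> $ fst ij + \<beta> $ snd ij\<bar> \<le> R"
    using dual_superlevel_entry_bounded[OF assms] by metis
  then obtain Rf where Rf: "\<And>ij \<alpha> \<beta>. c \<le> dual_obj \<Phi> p q \<alpha> \<beta> \<Longrightarrow> \<bar>\<alpha> $ fst ij + \<beta> $ snd ij\<bar> \<le> Rf ij"
    by metis
  show ?thesis
  proof (rule that)
    fix \<alpha> \<beta> i j assume "c \<le> dual_obj \<Phi> p q \<alpha> \<beta>"
    then have "\<bar>\<alpha> $ i + \<beta> $ j\<bar> \<le> Rf (i, j)"
      using Rf[of \<alpha> \<beta> "(i, j)"] by simp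
    also have "\<dots> \<le> Max (range Rf)"
      by (simp add: Max_ge)
    finally show "\<bar>\<alpha> $ i + \<beta> $ j\<bar> \<le> Max (range Rf)" .
  qed
qed

lemma continuous_dual_obj: "continuous_on UNIV (\<lambda>z. dual_obj \<Phi> p q (fst z) (snd z))"
proof -
  have "continuous_on UNIV (\<lambda>z :: (real^'n) \<times> (real^'m). oplus (fst z) (snd z))"
    unfolding oplus_def by (intro continuous_intros)
  then have "continuous_on UNIV (\<lambda>z :: (real^'n) \<times> (real^'m). legendre \<Phi> (oplus (fst z) (snd z)))"
    by (rule continuous_on_compose2[OF continuous_legendre]) auto
  then show ?thesis
    unfolding dual_obj_def by (intro continuous_intros)
qed

lemma dual_maximizer_exists:
  assumes p: "p \<in> prob_simplex" and q: "q \<in> prob_simplex"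
  shows "\<exists>\<alpha> \<beta>. \<forall>\<alpha>' \<beta>'. dual_obj \<Phi> p q \<alpha>' \<beta>' \<le> dual_obj \<Phi> p q \<alpha> \<beta>"
proof -
  define G where "G z = dual_obj \<Phi> p q (fst z) (snd z)" for z :: "(real^'n) \<times> (real^'m)"
  obtain R where R: "\<And>\<alpha> \<beta> i j. G (0, 0) \<le> dual_obj \<Phi> p q \<alpha> \<beta> \<Longrightarrow> \<bar>\<alpha> $ i + \<beta> $ j\<bar> \<le> R"
    using dual_superlevel_bounded[OF p q] by blast
  define K where "K = cball (0 :: (real^'n) \<times> (real^'m)) (real CARD('n) * R + real CARD('m) * (2 * R))"
  have "0 \<le> R"
    using R[of 0 0 undefined undefined] by (simp add: G_def)
  then have "(0, 0) \<in> K"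
    by (simp add: K_def zero_prod_def)
  then obtain z where "z \<in> K" and z: "\<And>y. y \<in> K \<Longrightarrow> G y \<le> G z"
    using continuous_attains_sup[OF compact_cball _ continuous_on_subset[OF continuous_dual_obj]]
    unfolding K_def G_def by (metis empty_iff subset_UNIV)
  have "dual_obj \<Phi> p q \<alpha> \<beta> \<le> G z" for \<alpha> \<beta>
  proof (cases "dual_obj \<Phi> p q \<alpha> \<beta> < G (0, 0)")
    case True
    then show ?thesis using z[OF \<open>(0, 0) \<in> K\<close>] by simp
  next
    case False
    \<comment> \<open>normalise \<open>\<beta>\<close> to vanish at an arbitrary fixed column\<close>
    define \<alpha>' where "\<alpha>' = (\<chi> i. \<alpha> $ i + \<beta> $ undefined)"
    define \<beta>' where "\<beta>' = (\<chi> j. \<beta> $ j - \<beta> $ undefined)"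
    have same: "dual_obj \<Phi> p q \<alpha>' \<beta>' = dual_obj \<Phi> p q \<alpha> \<beta>"
      unfolding \<alpha>'_def \<beta>'_def using p q unfolding prob_simplex_def by (intro dual_obj_shift) auto
    then have "\<forall>i j. \<bar>\<alpha>' $ i + \<beta>' $ j\<bar> \<le> R"
      using False R by auto
    moreover have "\<beta>' $ undefined = 0"
      by (simp add: \<beta>'_def)
    ultimately have "(\<alpha>', \<beta>') \<in> K"
      unfolding K_def mem_cball_0 by (rule norm_le_if_oplus_bounded)
    then show ?thesis
      using z same by (force simp: G_def)
  qed
  then show ?thesis
    unfolding G_def by blast
qed

lemma dual_maximizer_inner_oplus:
  assumes max: "\<forall>\<alpha>' \<beta>'. dual_obj \<Phi> p q \<alpha>' \<beta>' \<le> dual_obj \<Phi> p q \<alpha> \<beta>"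
  shows "p \<bullet> a + q \<bullet> b = S_inv (oplus \<alpha> \<beta>) \<bullet> oplus a b"
proof -
  define u where "u = oplus \<alpha> \<beta>"
  have le: "p \<bullet> a + q \<bullet> b \<le> S_inv u \<bullet> oplus a b" for a b
  proof -
    define v where "v = oplus a b"
    have ineq: "p \<bullet> a + q \<bullet> b \<le> S_inv (u + t *\<^sub>R v) \<bullet> v" if "0 < t" for t
    proof -
      define B where "B = S_inv (u + t *\<^sub>R v)"
      have "oplus (\<alpha> + t *\<^sub>R a) (\<beta> + t *\<^sub>R b) = u + t *\<^sub>R v"
        by (simp add: vec_eq_iff oplus_def u_def v_def algebra_simps)
      then have "p \<bullet> \<alpha> + t * (p \<bullet> a) + q \<bullet> \<beta> + t * (q \<bullet> b) - legendre \<Phi> (u + t *\<^sub>R v)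
          \<le> p \<bullet> \<alpha> + q \<bullet> \<beta> - legendre \<Phi> u"
        using max[rule_format, of "\<alpha> + t *\<^sub>R a" "\<beta> + t *\<^sub>R b"]
        by (simp add: dual_obj_def inner_add_right u_def)
      moreover have "legendre \<Phi> (u + t *\<^sub>R v) = B \<bullet> (u + t *\<^sub>R v) - \<Phi> B"
        by (simp add: legendre_eq B_def)
      moreover have "B \<bullet> u - \<Phi> B \<le> legendre \<Phi> u"
        using fenchel_young[OF S_inv_mem] by (simp add: B_def)
      ultimately have "t * (p \<bullet> a + q \<bullet> b) \<le> t * (B \<bullet> v)"
        by (simp add: inner_add_right algebra_simps)
      then show ?thesis
        using \<open>0 < t\<close> by (simp add: B_def)
    qed
    have "((\<lambda>t. S_inv (u + t *\<^sub>R v) \<bullet> v) \<longlongrightarrow> S_inv u \<bullet> v) (at_right 0)"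
    proof -
      have "isCont S_inv u"
        using continuous_S_inv by (simp add: continuous_on_eq_continuous_at)
      moreover have "((\<lambda>t::real. u + t *\<^sub>R v) \<longlongrightarrow> u) (at_right 0)"
        by (auto intro!: tendsto_eq_intros)
      ultimately have "((\<lambda>t. S_inv (u + t *\<^sub>R v)) \<longlongrightarrow> S_inv u) (at_right 0)"
        by (rule isCont_tendsto_compose)
      then show ?thesis
        by (intro tendsto_intros)
    qed
    moreover have "\<forall>\<^sub>F t in at_right 0. p \<bullet> a + q \<bullet> b \<le> S_inv (u + t *\<^sub>R v) \<bullet> v"
      using eventually_at_right_less by (rule eventually_mono) (rule ineq)
    ultimately show ?thesis
      unfolding v_def by (rule tendsto_lowerbound) simp
  qed
  have "oplus (- a) (- b) = - oplus a b"
    by (simp add: vec_eq_iff oplus_def)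
  then have "S_inv u \<bullet> oplus a b \<le> p \<bullet> a + q \<bullet> b"
    using le[of "- a" "- b"] by simp
  then show ?thesis
    using le[of a b] u_def by simp
qed

lemma dual_maximizer_coupling:
  assumes p: "p \<in> prob_simplex"
    and max: "\<forall>\<alpha>' \<beta>'. dual_obj \<Phi> p q \<alpha>' \<beta>' \<le> dual_obj \<Phi> p q \<alpha> \<beta>"
  shows "S_inv (oplus \<alpha> \<beta>) \<in> couplings p q"
proof (rule mem_couplingsI)
  define A where "A = S_inv (oplus \<alpha> \<beta>)"
  have eq: "p \<bullet> a + q \<bullet> b = A \<bullet> oplus a b" for a b
    unfolding A_def by (rule dual_maximizer_inner_oplus[OF max])
  show "\<forall>i. (\<Sum>j\<in>UNIV. A $ i $ j) = p $ i"
    using eq[of "axis _ 1" 0] by (simp add: inner_oplus inner_axis sum_axis_mult)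
  show "\<forall>j. (\<Sum>i\<in>UNIV. A $ i $ j) = q $ j"
    using eq[of 0 "axis _ 1"] by (simp add: inner_oplus inner_axis sum_axis_mult)
  show "\<forall>i j. 0 < A $ i $ j"
    using S_inv_mem unfolding A_def pos_mats_def by blast
  show "(\<Sum>i\<in>UNIV. p $ i) = 1"
    using p unfolding prob_simplex_def by simp
qed

section \<open>The optimal coupling\<close>

lemma coupling_minimizer_if_gradient_oplus:
  assumes A: "A \<in> couplings p q" and SA: "S A = oplus \<alpha> \<beta>" and Q: "Q \<in> couplings p q"
  shows "\<Phi> A \<le> \<Phi> Q"
proof -
  have pos: "A \<in> pos_mats" "Q \<in> pos_mats"
    using A Q couplings_subset_pos_mats by auto
  have "A \<bullet> oplus \<alpha> \<beta> = Q \<bullet> oplus \<alpha> \<beta>"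
    using couplings_inner_oplus[OF A] couplings_inner_oplus[OF Q] by simp
  then have "S A \<bullet> (Q - A) = 0"
    unfolding SA inner_diff_right inner_commute[of "oplus \<alpha> \<beta>"] by simp
  then show ?thesis
    using gradient_inequality[OF pos] by simp
qed

lemma coupling_minimizer_unique:
  assumes "P \<in> couplings p q" "\<forall>Q\<in>couplings p q. \<Phi> P \<le> \<Phi> Q"
  shows "\<forall>P'\<in>couplings p q. (\<forall>Q\<in>couplings p q. \<Phi> P' \<le> \<Phi> Q) \<longrightarrow> P' = P"
  using strict_convex_on_minimizer_unique[OF strict couplings_subset_pos_mats convex_couplings _ assms(1)]
    assms(2) by blast

lemma coupling_minimizer_unique_on_closure:
  assumes P: "P \<in> couplings p q" and P_min: "\<forall>Q\<in>couplings p q. \<Phi> P \<le> \<Phi> Q"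
    and cont: "continuous_on (closure (couplings p q)) \<Psi>"
    and agree: "\<forall>Q\<in>couplings p q. \<Psi> Q = \<Phi> Q"
  shows "(\<forall>Q\<in>closure (couplings p q). \<Psi> P \<le> \<Psi> Q)
    \<and> (\<forall>P'\<in>closure (couplings p q). (\<forall>Q\<in>closure (couplings p q). \<Psi> P' \<le> \<Psi> Q) \<longrightarrow> P' = P)"
proof (rule unique_minimizer_on_closure[OF _ cont P])
  have "convex_on (couplings p q) \<Phi>"
    by (rule convex_on_subset[OF convex couplings_subset_pos_mats convex_couplings])
  then show "convex_on (couplings p q) \<Psi>"
    by (rule convex_on_cong_on) (use agree in blast)
  show "\<forall>Q\<in>couplings p q. \<Psi> P \<le> \<Psi> Q"
    using P P_min agree by simp
  show "\<forall>P'\<in>couplings p q. (\<forall>Q\<in>couplings p q. \<Psi> P' \<le> \<Psi> Q) \<longrightarrow> P' = P"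
    using coupling_minimizer_unique[OF P P_min] agree by simp
qed (rule midpoint_in_couplings[OF P])

lemma dual_maximizer_gradient:
  assumes p: "p \<in> prob_simplex" and P: "P \<in> couplings p q"
    and P_min: "\<forall>Q\<in>couplings p q. \<Phi> P \<le> \<Phi> Q"
    and max: "\<forall>\<alpha>' \<beta>'. dual_obj \<Phi> p q \<alpha>' \<beta>' \<le> dual_obj \<Phi> p q \<alpha> \<beta>"
  shows "S P = oplus \<alpha> \<beta>"
proof -
  have "S_inv (oplus \<alpha> \<beta>) \<in> couplings p q"
    using dual_maximizer_coupling[OF p max] .
  moreover have "\<forall>Q\<in>couplings p q. \<Phi> (S_inv (oplus \<alpha> \<beta>)) \<le> \<Phi> Q"
    using coupling_minimizer_if_gradient_oplus[OF calculation] by simp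
  ultimately have "S_inv (oplus \<alpha> \<beta>) = P"
    using coupling_minimizer_unique[OF P P_min] by blast
  then show ?thesis
    using S_S_inv by metis
qed

end

theorem theorem1:
  fixes \<Phi> :: "real^'m::finite^'n::finite \<Rightarrow> real"
    and S :: "real^'m^'n \<Rightarrow> real^'m^'n"
    and p :: "real^'n" and q :: "real^'m"
  assumes smooth: "smooth_on pos_mats \<Phi>"
    and strict: "strict_convex_on pos_mats \<Phi>"
    and grad: "\<forall>A\<in>pos_mats. (\<Phi> has_derivative (\<lambda>H. S A \<bullet> H)) (at A)"
    and surj: "S ` pos_mats = UNIV"
    and p: "p \<in> prob_simplex" and q: "q \<in> prob_simplex"
  shows "\<exists>P. P \<in> couplings p q \<and> (\<forall>Q\<in>couplings p q. \<Phi> P \<le> \<Phi> Q)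
          \<and> (\<forall>P'\<in>couplings p q. (\<forall>Q\<in>couplings p q. \<Phi> P' \<le> \<Phi> Q) \<longrightarrow> P' = P)
          \<and> (\<forall>\<Psi>. continuous_on (closure (couplings p q)) \<Psi>
                 \<and> (\<forall>Q\<in>couplings p q. \<Psi> Q = \<Phi> Q) \<longrightarrow>
                 (\<forall>Q\<in>closure (couplings p q). \<Psi> P \<le> \<Psi> Q)
                 \<and> (\<forall>P'\<in>closure (couplings p q).
                      (\<forall>Q\<in>closure (couplings p q). \<Psi> P' \<le> \<Psi> Q) \<longrightarrow> P' = P))
          \<and> (\<exists>\<alpha> \<beta>. \<forall>\<alpha>' \<beta>'. dual_obj \<Phi> p q \<alpha>' \<beta>' \<le> dual_obj \<Phi> p q \<alpha> \<beta>)
          \<and> (\<forall>\<alpha> \<beta>. (\<forall>\<alpha>' \<beta>'. dual_obj \<Phi> p q \<alpha>' \<beta>' \<le> dual_obj \<Phi> p q \<alpha> \<beta>) \<longrightarrow>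
                 (\<forall>i j. S P $ i $ j = \<alpha> $ i + \<beta> $ j))"
proof -
  \<comment> \<open>only differentiability is needed\<close>
  interpret strictly_convex_potential \<Phi> S
    using strict grad surj by unfold_locales
  obtain \<alpha>0 \<beta>0 where max0: "\<forall>\<alpha>' \<beta>'. dual_obj \<Phi> p q \<alpha>' \<beta>' \<le> dual_obj \<Phi> p q \<alpha>0 \<beta>0"
    using dual_maximizer_exists[OF p q] by blast
  define P where "P = S_inv (oplus \<alpha>0 \<beta>0)"
  have P: "P \<in> couplings p q"
    unfolding P_def using dual_maximizer_coupling[OF p max0] .
  have P_min: "\<forall>Q\<in>couplings p q. \<Phi> P \<le> \<Phi> Q"
    using coupling_minimizer_if_gradient_oplus[OF P] by (simp add: P_def)
  have "\<forall>\<Psi>. continuous_on (closure (couplings p q)) \<Psi> \<and> (\<forall>Q\<in>couplings p q. \<Psi> Q = \<Phi> Q) \<longrightarrow>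
      (\<forall>Q\<in>closure (couplings p q). \<Psi> P \<le> \<Psi> Q)
      \<and> (\<forall>P'\<in>closure (couplings p q). (\<forall>Q\<in>closure (couplings p q). \<Psi> P' \<le> \<Psi> Q) \<longrightarrow> P' = P)"
    using coupling_minimizer_unique_on_closure[OF P P_min] by blast
  moreover have "\<forall>\<alpha> \<beta>. (\<forall>\<alpha>' \<beta>'. dual_obj \<Phi> p q \<alpha>' \<beta>' \<le> dual_obj \<Phi> p q \<alpha> \<beta>) \<longrightarrow>
      (\<forall>i j. S P $ i $ j = \<alpha> $ i + \<beta> $ j)"
    using dual_maximizer_gradient[OF p P P_min] by simp
  ultimately show ?thesis
    using P P_min coupling_minimizer_unique[OF P P_min] max0 by blast
qed

end
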